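(* Let $0<d<\pi/2$, $\mathscr{D}_d=\{\zeta\in\mathbb{C}:|\Im\zeta|<d\}$, $\psi(t)=\operatorname{arcsinh}(e^t)$. Assume $f$ is analytic on $\psi(\mathscr{D}_d)$ and there are constants $K,\alpha,\beta>0$ with $|f(z)|\le K\left|\left(\frac{z}{1+z}\right)^{\alpha-1}e^{-\beta z}\right|$ for all $z\in\psi(\mathscr{D}_d)$. Then $F(\zeta)=f(\psi(\zeta))\psi'(\zeta)$ belongs to $\mathbf{L}^{\mathrm{SE}}_{L,R,\alpha,\beta}(\mathscr{D}_d)$ with $L=2^{\beta/2}c_{\alpha,d}K$ and $R=2^{(1-\alpha+|1-\alpha|)/2}K$, where $c_{\alpha,d}=\{2(1+1/\cos d)\}^{(1-\alpha)/2}$ if $0<\alpha<1$ and $c_{\alpha,d}=2^{(\alpha-1)/2}$ if $\alpha\ge1$.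
   Context: For positive $L,R,\alpha,\beta$ and $0<d<\pi/2$, $\mathbf{L}^{\mathrm{SE}}_{L,R,\alpha,\beta}(\mathscr{D}_d)$ is the set of functions $F$ analytic on $\mathscr{D}_d$ such that for all $\zeta\in\mathscr{D}_d$, $|F(\zeta)|\le L\,|1+e^{-2\zeta}|^{-\alpha/2}|1+e^{2\zeta}|^{-\beta/2}$, and for all $x\in\mathbb{R}$, $|F(x)|\le R\,(1+e^{-2x})^{-\alpha/2}(1+e^{2x})^{-\beta/2}$. Here $\psi'(\zeta)=e^{\zeta}/\sqrt{1+e^{2\zeta}}$; complex functions use principal branches. *)

theory Defs
  imports "HOL-Analysis.Analysis"
begin

definition strip :: "real \<Rightarrow> complex set" where
  "strip d = {\<zeta>. \<bar>Im \<zeta>\<bar> < d}"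

definition carsinh :: "complex \<Rightarrow> complex" where
  "carsinh w = Ln (w + csqrt (1 + w\<^sup>2))"

definition psi :: "complex \<Rightarrow> complex" where
  "psi t = carsinh (exp t)"

definition psi' :: "complex \<Rightarrow> complex" where
  "psi' \<zeta> = exp \<zeta> / csqrt (1 + exp (2 * \<zeta>))"

definition LSE :: "real \<Rightarrow> real \<Rightarrow> real \<Rightarrow> real \<Rightarrow> real \<Rightarrow> (complex \<Rightarrow> complex) set" where
  "LSE L R \<alpha> \<beta> d = {F. F analytic_on strip d \<and>
     (\<forall>\<zeta>\<in>strip d. cmod (F \<zeta>) \<le>
        L * cmod (1 + exp (-2 * \<zeta>)) powr (-\<alpha>/2) * cmod (1 + exp (2 * \<zeta>)) powr (-\<beta>/2)) \<and>
     (\<forall>x::real. cmod (F (complex_of_real x)) \<le>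
        R * (1 + exp (-2 * x)) powr (-\<alpha>/2) * (1 + exp (2 * x)) powr (-\<beta>/2))}"

definition c_const :: "real \<Rightarrow> real \<Rightarrow> real" where
  "c_const \<alpha> d = (if \<alpha> < 1 then (2 * (1 + 1 / cos d)) powr ((1 - \<alpha>)/2)
                   else 2 powr ((\<alpha> - 1)/2))"

end

theory Submission
  imports Defs
begin

text \<open>
  Put \<open>z = psi \<zeta>\<close>. Since \<open>sinh z = exp \<zeta>\<close> and \<open>cosh z = csqrt (1 + exp (2 * \<zeta>))\<close>, we have
  \<open>psi' = tanh \<circ> psi\<close>, \<open>\<bar>1 + exp (2 * \<zeta>)\<bar> = \<bar>cosh z\<bar>\<^sup>2\<close> and
  \<open>\<bar>1 + exp (-2 * \<zeta>)\<bar> = \<bar>cosh z / sinh z\<bar>\<^sup>2\<close>; moreover \<open>\<bar>exp (-\<beta> z)\<bar> \<le> \<bar>cosh z\<bar> powr -\<beta>\<close>.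
  The hypothesis on \<open>f\<close> therefore gives the claimed bounds once the ratio
  \<open>\<rho> = \<bar>z / (1 + z)\<bar> / \<bar>tanh z\<bar>\<close> is controlled from both sides.
  In the half strip \<open>Re z > 0, \<bar>Im z\<bar> < pi/2\<close> one has \<open>\<rho>\<^sup>2 \<le> 2\<close>, and
  \<open>1 / \<rho>\<^sup>2 \<le> 2 (1 + 1 / cos d)\<close> because \<open>sinh z = exp \<zeta>\<close> lies in the sector \<open>\<bar>arg\<bar> \<le> d\<close>.
  For real \<open>z > 0\<close> the elementary bounds \<open>sinh z \<le> z cosh z \<le> (1 + z) sinh z\<close> give
  \<open>1/2 \<le> \<rho> \<le> 1\<close>.
\<close>

section \<open>Hyperbolic functions of a complex variable\<close>

lemma Re_sinh: "Re (sinh z) = sinh (Re z) * cos (Im z)"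
  by (simp add: sinh_field_def Re_exp Re_divide algebra_simps diff_divide_distrib)

lemma Im_sinh: "Im (sinh z) = cosh (Re z) * sin (Im z)"
  by (simp add: sinh_field_def cosh_field_def Im_exp Im_divide algebra_simps add_divide_distrib)

lemma Re_cosh: "Re (cosh z) = cosh (Re z) * cos (Im z)"
  by (simp add: cosh_field_def Re_exp Re_divide algebra_simps add_divide_distrib)

lemma Im_cosh: "Im (cosh z) = sinh (Re z) * sin (Im z)"
  by (simp add: sinh_field_def cosh_field_def Im_exp Im_divide algebra_simps diff_divide_distrib)

lemma norm_sinh_squared: "(cmod (sinh z))\<^sup>2 = (sinh (Re z))\<^sup>2 + (sin (Im z))\<^sup>2"
proof -
  have "(cmod (sinh z))\<^sup>2 = (sinh (Re z) * cos (Im z))\<^sup>2 + (cosh (Re z) * sin (Im z))\<^sup>2"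
    by (simp add: cmod_power2 Re_sinh Im_sinh)
  also have "\<dots> = (sinh (Re z))\<^sup>2 * ((cos (Im z))\<^sup>2 + (sin (Im z))\<^sup>2) + (sin (Im z))\<^sup>2"
    unfolding power_mult_distrib cosh_square_eq by algebra
  finally show ?thesis by simp
qed

lemma norm_cosh_squared: "(cmod (cosh z))\<^sup>2 = (sinh (Re z))\<^sup>2 + (cos (Im z))\<^sup>2"
proof -
  have "(cmod (cosh z))\<^sup>2 = (cosh (Re z) * cos (Im z))\<^sup>2 + (sinh (Re z) * sin (Im z))\<^sup>2"
    by (simp add: cmod_power2 Re_cosh Im_cosh)
  also have "\<dots> = (sinh (Re z))\<^sup>2 * ((cos (Im z))\<^sup>2 + (sin (Im z))\<^sup>2) + (cos (Im z))\<^sup>2"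
    unfolding power_mult_distrib cosh_square_eq by algebra
  finally show ?thesis by simp
qed

lemma sinh_of_real: "sinh (complex_of_real x) = complex_of_real (sinh x)"
  by (simp add: sinh_field_def flip: exp_of_real)

lemma cosh_of_real: "cosh (complex_of_real x) = complex_of_real (cosh x)"
  by (simp add: cosh_field_def flip: exp_of_real)

lemma sinh_le_mult_cosh:
  fixes a :: real assumes "0 \<le> a"
  shows "sinh a \<le> a * cosh a"
proof -
  let ?h = "\<lambda>x::real. x * cosh x - sinh x"
  have "?h 0 \<le> ?h a"
  proof (rule DERIV_nonneg_imp_nondecreasing[OF assms])
    fix x :: real assume "0 \<le> x"
    have "DERIV ?h x :> x * sinh x"
      by (auto intro!: derivative_eq_intros)
    then show "\<exists>y. DERIV ?h x :> y \<and> y \<ge> 0" using \<open>0 \<le> x\<close> by auto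
  qed
  then show ?thesis by simp
qed

lemma mult_cosh_le_sinh:
  fixes a :: real assumes "0 \<le> a"
  shows "a * cosh a \<le> (1 + a) * sinh a"
proof -
  have "exp (-a) * (1 + 2 * a) \<le> exp (-a) * exp (2 * a)"
    using exp_ge_add_one_self[of "2 * a"] by (intro mult_left_mono) auto
  also have "\<dots> = exp a" by (simp flip: exp_add)
  finally have "a * exp (-a) \<le> sinh a" by (simp add: sinh_field_def algebra_simps)
  then show ?thesis using cosh_minus_sinh[of a] by (simp add: algebra_simps)
qed

lemma abs_mult_cos_le_abs_sin:
  fixes b :: real assumes "\<bar>b\<bar> \<le> pi/2"
  shows "\<bar>b * cos b\<bar> \<le> \<bar>sin b\<bar>"
proof -
  let ?h = "\<lambda>x::real. sin x - x * cos x"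
  have "?h 0 \<le> ?h \<bar>b\<bar>"
  proof (rule DERIV_nonneg_imp_nondecreasing[of 0])
    fix x :: real assume "0 \<le> x" "x \<le> \<bar>b\<bar>"
    have "DERIV ?h x :> x * sin x"
      by (auto intro!: derivative_eq_intros)
    moreover have "0 \<le> x * sin x" using \<open>0 \<le> x\<close> \<open>x \<le> \<bar>b\<bar>\<close> assms by (simp add: sin_ge_zero)
    ultimately show "\<exists>y. DERIV ?h x :> y \<and> y \<ge> 0" by blast
  qed simp
  moreover have "0 \<le> cos b" using assms by (intro cos_ge_zero) auto
  moreover have "\<bar>sin b\<bar> = sin \<bar>b\<bar>" using assms sin_ge_zero[of b] sin_ge_zero[of "-b"]
    by (cases "0 \<le> b") auto
  ultimately show ?thesis by (simp add: abs_mult)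
qed

lemma two_mult_le_add_of_square_le_mult:
  fixes u X Y :: real
  assumes "0 \<le> X" "0 \<le> Y" "u\<^sup>2 \<le> X * Y"
  shows "2 * u \<le> X + Y"
proof (rule power2_le_imp_le)
  have "(X + Y)\<^sup>2 - (2 * u)\<^sup>2 = (X - Y)\<^sup>2 + 4 * (X * Y - u\<^sup>2)"
    by (simp add: power2_eq_square algebra_simps)
  also have "\<dots> \<ge> 0" using assms(3) by simp
  finally show "(2 * u)\<^sup>2 \<le> (X + Y)\<^sup>2" by simp
qed (use assms in simp)

lemma sinh_squared_le_mult_square:
  fixes a c t :: real
  assumes "0 < a" "1 \<le> t" and c: "1 + (sinh a)\<^sup>2 \<le> c\<^sup>2 * (1 + t\<^sup>2 * (sinh a)\<^sup>2)"
  shows "2 * (sinh a)\<^sup>2 \<le> (1 + t) * a\<^sup>2 * ((sinh a)\<^sup>2 + c\<^sup>2)"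
proof -
  define S where "S = sinh a"
  define D where "D = (1 + S\<^sup>2) * (1 + t\<^sup>2 * S\<^sup>2)"
  have "S\<^sup>2 \<le> (a * cosh a)\<^sup>2"
    using sinh_le_mult_cosh[of a] assms(1) by (intro power_mono) (simp_all add: S_def)
  then have aS: "S\<^sup>2 \<le> a\<^sup>2 * (1 + S\<^sup>2)" by (simp add: power_mult_distrib cosh_square_eq S_def add.commute)
  have "2 * S\<^sup>2 * D + S\<^sup>2 * (t - 1) * (1 - t * S\<^sup>2)\<^sup>2 = (1 + t) * S\<^sup>2 * (S\<^sup>2 * (1 + t\<^sup>2 * S\<^sup>2) + (1 + S\<^sup>2))"
    by (simp add: D_def power2_eq_square algebra_simps)
  moreover have "0 \<le> S\<^sup>2 * (t - 1) * (1 - t * S\<^sup>2)\<^sup>2" using assms(2) by simp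
  ultimately have "2 * S\<^sup>2 * D \<le> (1 + t) * S\<^sup>2 * (S\<^sup>2 * (1 + t\<^sup>2 * S\<^sup>2) + (1 + S\<^sup>2))" by linarith
  also have "\<dots> \<le> (1 + t) * (a\<^sup>2 * (1 + S\<^sup>2)) * (S\<^sup>2 * (1 + t\<^sup>2 * S\<^sup>2) + c\<^sup>2 * (1 + t\<^sup>2 * S\<^sup>2))"
    using aS c assms(2) by (intro mult_mono add_left_mono) (simp_all add: S_def)
  also have "\<dots> = ((1 + t) * a\<^sup>2 * (S\<^sup>2 + c\<^sup>2)) * D" by (simp add: D_def algebra_simps)
  finally show ?thesis by (simp add: D_def S_def add_pos_nonneg)
qed

lemma powr_le_of_two_sided_bounds:
  fixes \<rho> A B \<alpha> :: real
  assumes "0 < \<rho>" "\<rho> \<le> A" "1 / \<rho> \<le> B"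
  shows "\<rho> powr (\<alpha> - 1) \<le> (if \<alpha> < 1 then B powr (1 - \<alpha>) else A powr (\<alpha> - 1))"
proof (cases "\<alpha> < 1")
  case True
  have "\<rho> powr (\<alpha> - 1) = (1 / \<rho>) powr (1 - \<alpha>)"
    using assms(1) by (simp add: powr_divide powr_minus_divide[symmetric] flip: powr_minus)
  also have "\<dots> \<le> B powr (1 - \<alpha>)" using assms True by (intro powr_mono2) auto
  finally show ?thesis using True by simp
qed (use assms in \<open>auto intro: powr_mono2\<close>)

lemma sqrt_powr: "0 \<le> x \<Longrightarrow> sqrt x powr e = x powr (e / 2)"
  by (simp add: powr_powr flip: powr_half_sqrt)

lemma power2_powr_half:
  fixes x e :: real
  shows "0 \<le> x \<Longrightarrow> (x\<^sup>2) powr (e / 2) = x powr e"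
  by (simp flip: sqrt_powr)

section \<open>Comparing \<open>\<bar>z cosh z\<bar>\<close> with \<open>\<bar>(1 + z) sinh z\<bar>\<close>\<close>

lemma norm_mult_cosh_le_norm_mult_sinh:
  fixes z :: complex assumes "0 \<le> Re z" "\<bar>Im z\<bar> \<le> pi/2"
  shows "(cmod (z * cosh z))\<^sup>2 \<le> 2 * (cmod ((1 + z) * sinh z))\<^sup>2"
proof -
  define a b S c \<sigma> where "a = Re z" and "b = Im z" and "S = sinh a" and "c = cos b" and "\<sigma> = sin b"
  have "a \<le> S" using real_le_x_sinh[of a] assms(1) by (simp add: a_def S_def sinh_field_def exp_minus)
  have c1: "c\<^sup>2 \<le> 1" by (simp add: c_def abs_square_le_1)
  have bc: "(b * c)\<^sup>2 \<le> \<sigma>\<^sup>2"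
    using abs_mult_cos_le_abs_sin[of b] assms(2) by (simp add: b_def c_def \<sigma>_def abs_le_square_iff)
  have "a\<^sup>2 \<le> S\<^sup>2" using power_mono[OF \<open>a \<le> S\<close>, of 2] assms(1) by (simp add: a_def)
  then have "a\<^sup>2 * c\<^sup>2 \<le> S\<^sup>2" using mult_left_le[OF c1, of "a\<^sup>2"] by simp
  moreover have "a\<^sup>2 * S\<^sup>2 + S\<^sup>2 \<le> 2 * (1 + a)\<^sup>2 * S\<^sup>2"
    using mult_right_mono[of "a\<^sup>2 + 1" "2 * (1 + a)\<^sup>2" "S\<^sup>2"] assms(1)
    by (simp add: a_def power2_eq_square algebra_simps)
  moreover have "b\<^sup>2 * c\<^sup>2 \<le> 2 * (1 + a)\<^sup>2 * \<sigma>\<^sup>2"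
    using bc mult_right_mono[of 1 "2 * (1 + a)\<^sup>2" "\<sigma>\<^sup>2"] assms(1)
    by (simp add: a_def power2_eq_square algebra_simps)
  moreover have "0 \<le> b\<^sup>2 * S\<^sup>2" "0 \<le> b\<^sup>2 * \<sigma>\<^sup>2" by simp_all
  moreover have
    "(a\<^sup>2 + b\<^sup>2) * (S\<^sup>2 + c\<^sup>2) = a\<^sup>2 * S\<^sup>2 + a\<^sup>2 * c\<^sup>2 + b\<^sup>2 * S\<^sup>2 + b\<^sup>2 * c\<^sup>2"
    "2 * (((1 + a)\<^sup>2 + b\<^sup>2) * (S\<^sup>2 + \<sigma>\<^sup>2)) =
       2 * (1 + a)\<^sup>2 * S\<^sup>2 + 2 * (1 + a)\<^sup>2 * \<sigma>\<^sup>2 + 2 * b\<^sup>2 * S\<^sup>2 + 2 * b\<^sup>2 * \<sigma>\<^sup>2"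
    by (simp_all add: algebra_simps)
  ultimately have "(a\<^sup>2 + b\<^sup>2) * (S\<^sup>2 + c\<^sup>2) \<le> 2 * (((1 + a)\<^sup>2 + b\<^sup>2) * (S\<^sup>2 + \<sigma>\<^sup>2))"
    by argo
  moreover have "(cmod z)\<^sup>2 = a\<^sup>2 + b\<^sup>2" "(cmod (1 + z))\<^sup>2 = (1 + a)\<^sup>2 + b\<^sup>2"
    by (simp_all add: cmod_power2 a_def b_def)
  ultimately show ?thesis
    unfolding norm_mult power_mult_distrib norm_sinh_squared norm_cosh_squared
    by (simp add: a_def b_def S_def c_def \<sigma>_def mult.assoc)
qed

text \<open>
  In the next three lemmas, the hypothesis on \<open>t \<ge> 1\<close> is the squared form of
  \<open>\<bar>Im (sinh z)\<bar> \<le> sqrt (t\<^sup>2 - 1) * Re (sinh z)\<close>; it is applied with \<open>t = 1 / cos d\<close>,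
  i.e. to \<open>sinh z\<close> in the sector \<open>\<bar>arg\<bar> \<le> d\<close> (see \<open>psi_sector_bound\<close>).
\<close>

lemma norm_sinh_le_norm_cosh:
  fixes z :: complex and t :: real
  assumes "1 \<le> t"
    and sector: "(cosh (Re z))\<^sup>2 * (sin (Im z))\<^sup>2 \<le> (t\<^sup>2 - 1) * (sinh (Re z))\<^sup>2 * (cos (Im z))\<^sup>2"
  shows "2 * (cmod (sinh z))\<^sup>2 \<le> (1 + t) * (cmod (cosh z))\<^sup>2"
proof -
  define S c \<sigma> where "S = sinh (Re z)" and "c = cos (Im z)" and "\<sigma> = sin (Im z)"
  define X Y where "X = (t - 1) * S\<^sup>2" and "Y = (t + 1) * c\<^sup>2"
  have "\<sigma>\<^sup>2 \<le> 1" by (simp add: \<sigma>_def abs_square_le_1)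
  also have "1 \<le> (cosh (Re z))\<^sup>2" using cosh_real_ge_1 by (rule one_le_power)
  finally have "(\<sigma>\<^sup>2)\<^sup>2 \<le> (cosh (Re z))\<^sup>2 * \<sigma>\<^sup>2"
    unfolding power2_eq_square[of "\<sigma>\<^sup>2"] by (rule mult_right_mono) simp
  also have "\<dots> \<le> (t\<^sup>2 - 1) * S\<^sup>2 * c\<^sup>2"
    using sector by (simp add: S_def c_def \<sigma>_def)
  also have "\<dots> = X * Y" by (simp add: X_def Y_def power2_eq_square algebra_simps)
  finally have "2 * \<sigma>\<^sup>2 \<le> X + Y"
    using assms(1) by (intro two_mult_le_add_of_square_le_mult) (simp_all add: X_def Y_def)
  moreover have "(1 + t) * (S\<^sup>2 + c\<^sup>2) = 2 * S\<^sup>2 + (X + Y)"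
    by (simp add: X_def Y_def algebra_simps)
  ultimately show ?thesis
    unfolding norm_sinh_squared norm_cosh_squared S_def[symmetric] c_def[symmetric] \<sigma>_def[symmetric] distrib_left
    by linarith
qed

lemma norm_sinh_le_norm_mult_cosh:
  fixes z :: complex and t :: real
  assumes "0 < Re z" "1 \<le> t"
    and sector: "(cosh (Re z))\<^sup>2 * (sin (Im z))\<^sup>2 \<le> (t\<^sup>2 - 1) * (sinh (Re z))\<^sup>2 * (cos (Im z))\<^sup>2"
  shows "2 * (cmod (sinh z))\<^sup>2 \<le> (1 + t) * (cmod (z * cosh z))\<^sup>2"
proof -
  define a b S c \<sigma> where "a = Re z" and "b = Im z" and "S = sinh a" and "c = cos b" and "\<sigma> = sin b"
  have "0 < S" using assms(1) by (simp add: a_def S_def)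
  have "(cosh a)\<^sup>2 * (1 - c\<^sup>2) \<le> (t\<^sup>2 - 1) * S\<^sup>2 * c\<^sup>2"
    using sector by (simp add: a_def b_def S_def c_def sin_squared_eq)
  then have "1 + S\<^sup>2 \<le> c\<^sup>2 * (1 + t\<^sup>2 * S\<^sup>2)"
    by (simp add: S_def cosh_square_eq algebra_simps)
  then have P: "2 * S\<^sup>2 \<le> (1 + t) * a\<^sup>2 * (S\<^sup>2 + c\<^sup>2)"
    using sinh_squared_le_mult_square[of a t c] assms(1,2) by (simp add: a_def S_def)
  have "a\<^sup>2 * \<sigma>\<^sup>2 \<le> S\<^sup>2 * b\<^sup>2"
  proof (rule mult_mono)
    show "a\<^sup>2 \<le> S\<^sup>2"
      using real_le_x_sinh[of a] assms(1) by (intro power_mono) (simp_all add: a_def S_def sinh_field_def exp_minus)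
    show "\<sigma>\<^sup>2 \<le> b\<^sup>2"
      using abs_sin_x_le_abs_x[of b] by (simp add: \<sigma>_def abs_le_square_iff)
  qed simp_all
  have "2 * (S\<^sup>2 + \<sigma>\<^sup>2) * S\<^sup>2 = (2 * S\<^sup>2) * (S\<^sup>2 + \<sigma>\<^sup>2)" by simp
  also have "\<dots> \<le> ((1 + t) * a\<^sup>2 * (S\<^sup>2 + c\<^sup>2)) * (S\<^sup>2 + \<sigma>\<^sup>2)"
    using P by (rule mult_right_mono) simp
  also have "\<dots> = (1 + t) * (S\<^sup>2 + c\<^sup>2) * (a\<^sup>2 * S\<^sup>2 + a\<^sup>2 * \<sigma>\<^sup>2)" by (simp add: algebra_simps)
  also have "\<dots> \<le> (1 + t) * (S\<^sup>2 + c\<^sup>2) * (a\<^sup>2 * S\<^sup>2 + S\<^sup>2 * b\<^sup>2)"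
    using \<open>a\<^sup>2 * \<sigma>\<^sup>2 \<le> S\<^sup>2 * b\<^sup>2\<close> assms(2) by (intro mult_left_mono add_left_mono) simp_all
  also have "\<dots> = (1 + t) * (a\<^sup>2 + b\<^sup>2) * (S\<^sup>2 + c\<^sup>2) * S\<^sup>2" by (simp add: algebra_simps)
  finally have "2 * (S\<^sup>2 + \<sigma>\<^sup>2) \<le> (1 + t) * (a\<^sup>2 + b\<^sup>2) * (S\<^sup>2 + c\<^sup>2)"
    using \<open>0 < S\<close> by simp
  moreover have "(cmod z)\<^sup>2 = a\<^sup>2 + b\<^sup>2" by (simp add: cmod_power2 a_def b_def)
  ultimately show ?thesis
    unfolding norm_mult power_mult_distrib norm_sinh_squared norm_cosh_squared
    by (simp add: a_def b_def S_def c_def \<sigma>_def mult.assoc)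
qed

lemma norm_mult_sinh_le_norm_mult_cosh:
  fixes z :: complex and t :: real
  assumes "0 < Re z" "1 \<le> t"
    and sector: "(cosh (Re z))\<^sup>2 * (sin (Im z))\<^sup>2 \<le> (t\<^sup>2 - 1) * (sinh (Re z))\<^sup>2 * (cos (Im z))\<^sup>2"
  shows "(cmod ((1 + z) * sinh z))\<^sup>2 \<le> 2 * (1 + t) * (cmod (z * cosh z))\<^sup>2"
proof -
  have "(cmod (1 + z))\<^sup>2 \<le> 2 * (1 + (cmod z)\<^sup>2)"
    unfolding cmod_power2 using sum_squares_ge_zero[of "1 - Re z" 0] zero_le_square[of "Im z"]
    by (simp add: power2_eq_square algebra_simps del: zero_le_square)
  then have "(cmod ((1 + z) * sinh z))\<^sup>2 \<le> 2 * (1 + (cmod z)\<^sup>2) * (cmod (sinh z))\<^sup>2"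
    unfolding norm_mult power_mult_distrib by (rule mult_right_mono) simp
  also have "\<dots> = 2 * (cmod (sinh z))\<^sup>2 + (cmod z)\<^sup>2 * (2 * (cmod (sinh z))\<^sup>2)"
    by (simp add: algebra_simps)
  also have "\<dots> \<le> (1 + t) * (cmod (z * cosh z))\<^sup>2 + (cmod z)\<^sup>2 * ((1 + t) * (cmod (cosh z))\<^sup>2)"
    using norm_sinh_le_norm_mult_cosh[OF assms] norm_sinh_le_norm_cosh[OF assms(2,3)]
    by (intro add_mono mult_left_mono) simp_all
  also have "\<dots> = 2 * (1 + t) * (cmod (z * cosh z))\<^sup>2"
    by (simp add: norm_mult power_mult_distrib algebra_simps)
  finally show ?thesis .
qed

section \<open>The principal complex arcsinh and the map \<open>psi\<close>\<close>

lemma carsinh_branch_product: "(w + csqrt (1 + w\<^sup>2)) * (csqrt (1 + w\<^sup>2) - w) = 1"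
  using power2_csqrt[of "1 + w\<^sup>2"] by (simp add: power2_eq_square algebra_simps)

lemma sinh_carsinh: "sinh (carsinh w) = w"
  and cosh_carsinh: "cosh (carsinh w) = csqrt (1 + w\<^sup>2)"
proof -
  define u where "u = w + csqrt (1 + w\<^sup>2)"
  have "u \<noteq> 0" using carsinh_branch_product[of w] by (auto simp: u_def)
  then have "exp (carsinh w) = u" "exp (- carsinh w) = csqrt (1 + w\<^sup>2) - w"
    using carsinh_branch_product[of w]
    by (simp_all add: carsinh_def u_def exp_minus inverse_eq_divide field_simps)
  then show "sinh (carsinh w) = w" "cosh (carsinh w) = csqrt (1 + w\<^sup>2)"
    by (simp_all add: sinh_field_def cosh_field_def u_def)
qed

lemma plus_csqrt_notin_nonpos_Reals:
  assumes "0 < Re w" shows "w + csqrt (1 + w\<^sup>2) \<notin> \<real>\<^sub>\<le>\<^sub>0"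
  using assms Re_csqrt[of "1 + w\<^sup>2"] by (auto simp: complex_nonpos_Reals_iff simp del: csqrt.simps)

lemma one_plus_square_notin_nonpos_Reals:
  assumes "0 < Re w" shows "1 + w\<^sup>2 \<notin> \<real>\<^sub>\<le>\<^sub>0"
proof
  assume "1 + w\<^sup>2 \<in> \<real>\<^sub>\<le>\<^sub>0"
  then have "Re (1 + w\<^sup>2) \<le> 0" "2 * Re w * Im w = 0"
    by (auto simp: complex_nonpos_Reals_iff power2_eq_square)
  then show False using assms by (simp add: power2_eq_square) (smt (verit) zero_le_square)
qed

lemma abs_Im_carsinh_less:
  assumes "0 < Re w" shows "\<bar>Im (carsinh w)\<bar> < pi/2"
  unfolding carsinh_def using assms Re_csqrt[of "1 + w\<^sup>2"]
  by (intro Re_Ln_pos_lt_imp) (simp del: csqrt.simps)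

lemma Re_carsinh_pos:
  assumes "0 < Re w" shows "0 < Re (carsinh w)"
proof -
  have "0 < cos (Im (carsinh w))"
    using abs_Im_carsinh_less[OF assms] by (intro cos_gt_zero_pi) auto
  moreover have "sinh (Re (carsinh w)) * cos (Im (carsinh w)) = Re w"
    using Re_sinh[of "carsinh w"] by (simp add: sinh_carsinh)
  ultimately show ?thesis using assms by (metis zero_less_mult_pos2 sinh_real_pos_iff)
qed

lemma carsinh_of_real: "carsinh (complex_of_real x) = complex_of_real (arsinh x)"
proof -
  have "0 < x + sqrt (x\<^sup>2 + 1)" by (rule arsinh_real_aux)
  then show ?thesis
    by (simp add: carsinh_def arsinh_real_def csqrt_of_real add.commute Ln_of_real flip: of_real_add)
qed

lemma open_strip: "open (strip d)"
  unfolding strip_def by (intro open_Collect_less continuous_intros)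

lemma Re_exp_pos: "\<bar>Im \<zeta>\<bar> < pi/2 \<Longrightarrow> 0 < Re (exp \<zeta>)"
  by (simp add: Re_exp cos_gt_zero_pi)

lemma sinh_psi: "sinh (psi \<zeta>) = exp \<zeta>"
  by (simp add: psi_def sinh_carsinh)

lemma Re_psi_pos: "\<bar>Im \<zeta>\<bar> < pi/2 \<Longrightarrow> 0 < Re (psi \<zeta>)"
  unfolding psi_def by (intro Re_carsinh_pos Re_exp_pos)

lemma cosh_psi_nonzero:
  assumes "\<bar>Im \<zeta>\<bar> < pi/2" shows "cosh (psi \<zeta>) \<noteq> 0"
proof -
  have "1 + (exp \<zeta>)\<^sup>2 \<noteq> 0"
    using one_plus_square_notin_nonpos_Reals[OF Re_exp_pos[OF assms]] by auto
  then show ?thesis by (simp add: psi_def cosh_carsinh)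
qed

lemma psi_of_real: "psi (complex_of_real x) = complex_of_real (arsinh (exp x))"
  by (simp add: psi_def exp_of_real carsinh_of_real)

lemma psi'_eq_tanh_psi: "psi' \<zeta> = tanh (psi \<zeta>)"
  by (simp add: psi'_def psi_def tanh_def sinh_carsinh cosh_carsinh exp_double)

lemma psi_analytic_on:
  assumes "d \<le> pi/2" shows "psi analytic_on strip d"
proof -
  have "(\<lambda>\<zeta>. Ln (exp \<zeta> + csqrt (1 + (exp \<zeta>)\<^sup>2))) holomorphic_on strip d"
    using assms Re_exp_pos
    by (intro holomorphic_intros plus_csqrt_notin_nonpos_Reals one_plus_square_notin_nonpos_Reals)
      (auto simp: strip_def)
  then show ?thesis
    by (simp add: analytic_on_open open_strip psi_def[abs_def] carsinh_def)
qed

lemma psi'_analytic_on: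
  assumes "d \<le> pi/2" shows "psi' analytic_on strip d"
proof -
  have "(\<lambda>\<zeta>. exp \<zeta> / csqrt (1 + (exp \<zeta>)\<^sup>2)) holomorphic_on strip d"
  proof (intro holomorphic_intros one_plus_square_notin_nonpos_Reals)
    fix \<zeta> assume "\<zeta> \<in> strip d"
    then have "1 + (exp \<zeta>)\<^sup>2 \<notin> \<real>\<^sub>\<le>\<^sub>0"
      using assms Re_exp_pos by (intro one_plus_square_notin_nonpos_Reals) (auto simp: strip_def)
    then show "csqrt (1 + (exp \<zeta>)\<^sup>2) \<noteq> 0" by auto
  qed (use assms Re_exp_pos in \<open>auto simp: strip_def\<close>)
  then show ?thesis
    by (simp add: analytic_on_open open_strip psi'_def[abs_def] exp_double)
qed

lemma one_plus_exp_double_eq: "1 + exp (2 * \<zeta>) = (cosh (psi \<zeta>))\<^sup>2"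
  by (simp add: cosh_square_eq sinh_psi exp_double)

lemma one_plus_exp_minus_double_eq: "1 + exp (-2 * \<zeta>) = (cosh (psi \<zeta>) / sinh (psi \<zeta>))\<^sup>2"
proof -
  have "exp (-2 * \<zeta>) = inverse ((exp \<zeta>)\<^sup>2)" by (simp add: exp_minus flip: exp_double)
  then show ?thesis
    by (simp add: power_divide cosh_square_eq sinh_psi field_simps)
qed

lemma exp_in_sector:
  assumes "\<bar>Im \<zeta>\<bar> \<le> d" "d < pi/2"
  shows "\<bar>Im (exp \<zeta>)\<bar> * cos d \<le> Re (exp \<zeta>) * sin d"
proof -
  define y where "y = Im \<zeta>"
  have "0 \<le> sin (d - \<bar>y\<bar>)" using assms by (intro sin_ge_zero) (auto simp: y_def)
  moreover have "\<bar>sin y\<bar> = sin \<bar>y\<bar>"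
    using assms sin_ge_zero[of y] sin_ge_zero[of "-y"] by (cases "0 \<le> y") (auto simp: y_def)
  ultimately have "\<bar>sin y\<bar> * cos d \<le> cos y * sin d" by (simp add: sin_diff algebra_simps)
  then show ?thesis
    by (simp add: Re_exp Im_exp abs_mult mult.assoc mult_left_mono flip: y_def)
qed

lemma psi_sector_bound:
  assumes "\<bar>Im \<zeta>\<bar> \<le> d" "d < pi/2"
  shows "(cosh (Re (psi \<zeta>)))\<^sup>2 * (sin (Im (psi \<zeta>)))\<^sup>2
           \<le> ((1 / cos d)\<^sup>2 - 1) * (sinh (Re (psi \<zeta>)))\<^sup>2 * (cos (Im (psi \<zeta>)))\<^sup>2"
proof -
  define z where "z = psi \<zeta>"
  have cd: "0 < cos d" using assms by (intro cos_gt_zero_pi) auto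
  have "sinh z = exp \<zeta>" by (simp add: z_def sinh_psi)
  then have "\<bar>cosh (Re z) * sin (Im z)\<bar> * cos d \<le> sinh (Re z) * cos (Im z) * sin d"
    using exp_in_sector[OF assms] Re_sinh[of z] Im_sinh[of z] by simp
  then have "(\<bar>cosh (Re z) * sin (Im z)\<bar> * cos d)\<^sup>2 \<le> (sinh (Re z) * cos (Im z) * sin d)\<^sup>2"
    using cd by (intro power_mono) auto
  then have "(cosh (Re z))\<^sup>2 * (sin (Im z))\<^sup>2 \<le> (sinh (Re z))\<^sup>2 * (cos (Im z))\<^sup>2 * ((sin d)\<^sup>2 / (cos d)\<^sup>2)"
    using cd by (simp add: power_mult_distrib field_simps)
  moreover have "(sin d)\<^sup>2 / (cos d)\<^sup>2 = (1 / cos d)\<^sup>2 - 1"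
    using cd by (simp add: field_simps sin_squared_eq)
  ultimately show ?thesis by (simp add: z_def mult_ac)
qed

section \<open>The ratio \<open>\<bar>z / (1 + z)\<bar> / \<bar>tanh z\<bar>\<close>\<close>

definition tanh_ratio :: "complex \<Rightarrow> real" where
  "tanh_ratio z = cmod (z * cosh z) / cmod ((1 + z) * sinh z)"

lemma tanh_ratio_psi_powr_le_c_const:
  assumes "\<bar>Im \<zeta>\<bar> < d" "d < pi/2"
  shows "tanh_ratio (psi \<zeta>) powr (\<alpha> - 1) \<le> c_const \<alpha> d"
proof -
  define z t where "z = psi \<zeta>" and "t = 1 / cos d"
  have strip: "\<bar>Im \<zeta>\<bar> < pi/2" using assms by simp
  have z: "0 < Re z" "\<bar>Im z\<bar> < pi/2"
    using Re_psi_pos[OF strip] abs_Im_carsinh_less[OF Re_exp_pos[OF strip]] by (simp_all add: z_def psi_def)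
  have "0 < cos d" "cos d \<le> 1" using assms by (auto intro: cos_gt_zero_pi)
  then have "1 \<le> t" by (simp add: t_def)
  have sector: "(cosh (Re z))\<^sup>2 * (sin (Im z))\<^sup>2 \<le> (t\<^sup>2 - 1) * (sinh (Re z))\<^sup>2 * (cos (Im z))\<^sup>2"
    using psi_sector_bound[of \<zeta> d] assms by (simp add: z_def t_def)
  have "z \<noteq> 0" "1 + z \<noteq> 0" using z(1) by (auto simp: complex_eq_iff)
  moreover have "sinh z \<noteq> 0" "cosh z \<noteq> 0" using cosh_psi_nonzero[OF strip] by (simp_all add: z_def sinh_psi)
  ultimately have pos: "0 < cmod (z * cosh z)" "0 < cmod ((1 + z) * sinh z)" by auto
  have "tanh_ratio z \<le> sqrt 2"
    using norm_mult_cosh_le_norm_mult_sinh[of z] z pos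
    by (intro real_le_rsqrt) (simp add: tanh_ratio_def power_divide divide_le_eq)
  moreover have "1 / tanh_ratio z \<le> sqrt (2 * (1 + t))"
    using norm_mult_sinh_le_norm_mult_cosh[OF z(1) \<open>1 \<le> t\<close> sector] pos
    by (intro real_le_rsqrt) (simp add: tanh_ratio_def power_divide divide_le_eq mult_ac)
  ultimately have "tanh_ratio z powr (\<alpha> - 1)
      \<le> (if \<alpha> < 1 then sqrt (2 * (1 + t)) powr (1 - \<alpha>) else sqrt 2 powr (\<alpha> - 1))"
    using pos by (intro powr_le_of_two_sided_bounds) (simp_all add: tanh_ratio_def)
  also have "\<dots> = c_const \<alpha> d"
    using \<open>1 \<le> t\<close> by (simp add: c_const_def sqrt_powr t_def)
  finally show ?thesis by (simp add: z_def)
qed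

lemma tanh_ratio_of_real_powr_le:
  assumes "0 < x"
  shows "tanh_ratio (complex_of_real x) powr (\<alpha> - 1) \<le> 2 powr ((1 - \<alpha> + \<bar>1 - \<alpha>\<bar>) / 2)"
proof -
  have "0 < sinh x" using assms by simp
  have ratio: "tanh_ratio (complex_of_real x) = x * cosh x / ((1 + x) * sinh x)"
    using assms norm_of_real[of "1 + x"]
    by (simp add: tanh_ratio_def sinh_of_real cosh_of_real norm_mult)
  have "tanh_ratio (complex_of_real x) \<le> 1"
    using mult_cosh_le_sinh[of x] assms \<open>0 < sinh x\<close> by (simp add: ratio)
  moreover have "1 / tanh_ratio (complex_of_real x) \<le> 2"
  proof -
    have "x * sinh x \<le> x * cosh x" using assms by (intro mult_left_mono) (simp_all add: sinh_le_cosh_real)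
    then have "(1 + x) * sinh x \<le> 2 * (x * cosh x)" using sinh_le_mult_cosh[of x] assms
      by (simp only: distrib_right mult_1_left) linarith
    then show ?thesis using assms by (simp add: ratio divide_le_eq)
  qed
  moreover have "0 < tanh_ratio (complex_of_real x)" using assms \<open>0 < sinh x\<close> by (simp add: ratio)
  ultimately have bound: "tanh_ratio (complex_of_real x) powr (\<alpha> - 1)
      \<le> (if \<alpha> < 1 then 2 powr (1 - \<alpha>) else 1 powr (\<alpha> - 1))"
    by (intro powr_le_of_two_sided_bounds)
  show ?thesis
  proof (cases "\<alpha> < 1")
    case True
    then have "(1 - \<alpha> + \<bar>1 - \<alpha>\<bar>) / 2 = 1 - \<alpha>" by auto
    then show ?thesis using bound True by (simp only: if_True)
  next
    case False
    then have "(1 - \<alpha> + \<bar>1 - \<alpha>\<bar>) / 2 = 0" by auto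
    then show ?thesis using bound False by simp
  qed
qed

lemma norm_mult_tanh_le:
  fixes f :: "complex \<Rightarrow> complex" and z :: complex
  assumes z: "0 < Re z" "sinh z \<noteq> 0" "cosh z \<noteq> 0" and "0 \<le> K" "0 \<le> \<beta>"
    and f: "cmod (f z) \<le> K * cmod ((z / (1 + z)) powr (complex_of_real (\<alpha> - 1)) * exp (- complex_of_real \<beta> * z))"
    and ratio: "tanh_ratio z powr (\<alpha> - 1) \<le> c"
  shows "cmod (f z * tanh z)
           \<le> c * K * (cmod (cosh z / sinh z))\<^sup>2 powr (-\<alpha>/2) * (cmod (cosh z))\<^sup>2 powr (-\<beta>/2)"
proof -
  define P Q where "P = cmod (sinh z)" and "Q = cmod (cosh z)"
  have "0 < P" "0 < Q" using z by (simp_all add: P_def Q_def)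
  have Q_le: "Q \<le> exp (Re z)"
  proof -
    have "Q\<^sup>2 \<le> (cosh (Re z))\<^sup>2"
      using norm_cosh_squared[of z] abs_square_le_1[of "cos (Im z)"] by (simp add: Q_def cosh_square_eq)
    then have "Q \<le> cosh (Re z)" by (rule power2_le_imp_le) simp
    also have "cosh (Re z) \<le> exp (Re z)" using z(1) by (simp add: cosh_field_def)
    finally show ?thesis .
  qed
  have "cmod (z / (1 + z)) = tanh_ratio z * (P / Q)"
    using \<open>0 < P\<close> \<open>0 < Q\<close> by (simp add: tanh_ratio_def norm_mult norm_divide P_def Q_def)
  then have "cmod ((z / (1 + z)) powr (complex_of_real (\<alpha> - 1)))
      = (tanh_ratio z * (P / Q)) powr (\<alpha> - 1)"
    by (simp add: norm_powr_real_powr' del: times_divide_eq_right)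
  also have "\<dots> = tanh_ratio z powr (\<alpha> - 1) * (P / Q) powr (\<alpha> - 1)"
    by (rule powr_mult)
  moreover have "cmod (exp (- complex_of_real \<beta> * z)) \<le> Q powr (- \<beta>)"
  proof -
    have "cmod (exp (- complex_of_real \<beta> * z)) = exp (- (\<beta> * Re z))"
      by (simp add: norm_exp_eq_Re)
    also have "\<dots> = inverse (exp (Re z) powr \<beta>)"
      by (simp add: powr_def exp_minus mult.commute)
    also have "\<dots> \<le> inverse (Q powr \<beta>)"
      using \<open>0 < Q\<close> Q_le assms(5) by (intro le_imp_inverse_le powr_mono2) auto
    finally show ?thesis by (simp add: powr_minus)
  qed
  ultimately have "cmod (f z) \<le> K * (tanh_ratio z powr (\<alpha> - 1) * (P / Q) powr (\<alpha> - 1) * Q powr (- \<beta>))"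
    using f \<open>0 \<le> K\<close> by (auto simp: norm_mult intro!: order.trans[OF f] mult_left_mono mult_mono)
  then have "cmod (f z * tanh z) \<le> K * (tanh_ratio z powr (\<alpha> - 1) * (P / Q) powr (\<alpha> - 1) * Q powr (- \<beta>)) * (P / Q)"
    unfolding norm_mult tanh_def norm_divide P_def[symmetric] Q_def[symmetric]
    by (rule mult_right_mono) (use \<open>0 < P\<close> \<open>0 < Q\<close> in simp)
  also have "\<dots> = K * tanh_ratio z powr (\<alpha> - 1) * ((P / Q) powr \<alpha> * Q powr (- \<beta>))"
    using \<open>0 < P\<close> \<open>0 < Q\<close> by (simp add: powr_diff field_simps)
  also have "\<dots> \<le> K * c * ((P / Q) powr \<alpha> * Q powr (- \<beta>))"
    using ratio \<open>0 \<le> K\<close> by (intro mult_right_mono mult_left_mono) auto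
  also have "(P / Q) powr \<alpha> = (cmod (cosh z / sinh z))\<^sup>2 powr (-\<alpha>/2)"
    using power2_powr_half[of "Q / P" "- \<alpha>"] \<open>0 < P\<close> \<open>0 < Q\<close>
    by (simp add: norm_divide P_def Q_def powr_divide powr_minus_divide)
  also have "Q powr (- \<beta>) = (cmod (cosh z))\<^sup>2 powr (-\<beta>/2)"
    using power2_powr_half[of Q "- \<beta>"] \<open>0 < Q\<close> by (simp add: Q_def)
  finally show ?thesis by (simp add: mult_ac)
qed

lemma norm_one_plus_exp_of_real: "cmod (1 + exp (complex_of_real y)) = 1 + exp y"
proof -
  have "1 + exp (complex_of_real y) = complex_of_real (1 + exp y)" by (simp flip: exp_of_real)
  then show ?thesis by (simp only: norm_of_real) (simp add: add_pos_pos)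
qed

lemma norm_f_psi_mult_psi'_le:
  fixes f :: "complex \<Rightarrow> complex"
  assumes "\<bar>Im \<zeta>\<bar> < pi/2" "0 \<le> K" "0 \<le> \<beta>"
    and "cmod (f (psi \<zeta>))
           \<le> K * cmod ((psi \<zeta> / (1 + psi \<zeta>)) powr (complex_of_real (\<alpha> - 1)) * exp (- complex_of_real \<beta> * psi \<zeta>))"
    and "tanh_ratio (psi \<zeta>) powr (\<alpha> - 1) \<le> c"
  shows "cmod (f (psi \<zeta>) * psi' \<zeta>)
           \<le> c * K * cmod (1 + exp (-2 * \<zeta>)) powr (-\<alpha>/2) * cmod (1 + exp (2 * \<zeta>)) powr (-\<beta>/2)"
proof -
  have "cmod (f (psi \<zeta>) * tanh (psi \<zeta>))
      \<le> c * K * (cmod (cosh (psi \<zeta>) / sinh (psi \<zeta>)))\<^sup>2 powr (-\<alpha>/2) * (cmod (cosh (psi \<zeta>)))\<^sup>2 powr (-\<beta>/2)"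
    using assms Re_psi_pos cosh_psi_nonzero by (intro norm_mult_tanh_le) (simp_all add: sinh_psi)
  then show ?thesis
    unfolding psi'_eq_tanh_psi one_plus_exp_double_eq one_plus_exp_minus_double_eq norm_power .
qed

lemma norm_f_psi_mult_psi'_le_on_strip:
  fixes f :: "complex \<Rightarrow> complex"
  assumes "d < pi / 2" "0 < K" "0 < \<beta>" and "\<zeta> \<in> strip d"
    and "\<forall>z \<in> psi ` strip d.
           cmod (f z) \<le> K * cmod ((z / (1 + z)) powr (complex_of_real (\<alpha> - 1)) * exp (- (complex_of_real \<beta>) * z))"
  shows "cmod (f (psi \<zeta>) * psi' \<zeta>)
           \<le> 2 powr (\<beta>/2) * c_const \<alpha> d * K * cmod (1 + exp (-2 * \<zeta>)) powr (-\<alpha>/2) * cmod (1 + exp (2 * \<zeta>)) powr (-\<beta>/2)"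
proof -
  have "\<bar>Im \<zeta>\<bar> < d" using assms(4) by (simp add: strip_def)
  then have "cmod (f (psi \<zeta>) * psi' \<zeta>)
      \<le> c_const \<alpha> d * K * cmod (1 + exp (-2 * \<zeta>)) powr (-\<alpha>/2) * cmod (1 + exp (2 * \<zeta>)) powr (-\<beta>/2)"
    using assms by (intro norm_f_psi_mult_psi'_le tanh_ratio_psi_powr_le_c_const) auto
  also have "\<dots> \<le> 2 powr (\<beta>/2) * (c_const \<alpha> d * K * cmod (1 + exp (-2 * \<zeta>)) powr (-\<alpha>/2) * cmod (1 + exp (2 * \<zeta>)) powr (-\<beta>/2))"
    using mult_right_mono[OF ge_one_powr_ge_zero] assms(2,3) by (simp add: c_const_def)
  finally show ?thesis by (simp add: mult_ac)
qed

lemma norm_f_psi_mult_psi'_le_on_reals: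
  fixes f :: "complex \<Rightarrow> complex" and x :: real
  assumes "0 < d" "d < pi / 2" "0 < K" "0 < \<beta>"
    and "\<forall>z \<in> psi ` strip d.
           cmod (f z) \<le> K * cmod ((z / (1 + z)) powr (complex_of_real (\<alpha> - 1)) * exp (- (complex_of_real \<beta>) * z))"
  shows "cmod (f (psi x) * psi' x)
           \<le> 2 powr ((1 - \<alpha> + \<bar>1 - \<alpha>\<bar>)/2) * K * (1 + exp (-2 * x)) powr (-\<alpha>/2) * (1 + exp (2 * x)) powr (-\<beta>/2)"
proof -
  have "tanh_ratio (psi x) powr (\<alpha> - 1) \<le> 2 powr ((1 - \<alpha> + \<bar>1 - \<alpha>\<bar>)/2)"
    using tanh_ratio_of_real_powr_le[of "arsinh (exp x)" \<alpha>] by (simp add: psi_of_real)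
  moreover have "complex_of_real x \<in> strip d" using assms(1) by (simp add: strip_def)
  ultimately have "cmod (f (psi x) * psi' x) \<le> 2 powr ((1 - \<alpha> + \<bar>1 - \<alpha>\<bar>)/2) * K
      * cmod (1 + exp (-2 * complex_of_real x)) powr (-\<alpha>/2) * cmod (1 + exp (2 * complex_of_real x)) powr (-\<beta>/2)"
    using assms by (intro norm_f_psi_mult_psi'_le) (auto simp: strip_def)
  moreover have "cmod (1 + exp (-2 * complex_of_real x)) = 1 + exp (-2 * x)"
    "cmod (1 + exp (2 * complex_of_real x)) = 1 + exp (2 * x)"
    using norm_one_plus_exp_of_real[of "-2 * x"] norm_one_plus_exp_of_real[of "2 * x"] by simp_all
  ultimately show ?thesis by simp
qed

theorem lemma3:
  fixes f :: "complex \<Rightarrow> complex" and d K \<alpha> \<beta> :: real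
  assumes "0 < d" "d < pi / 2"
    and "f analytic_on (psi ` strip d)"
    and "0 < K" "0 < \<alpha>" "0 < \<beta>"
    and "\<forall>z \<in> psi ` strip d.
           cmod (f z) \<le> K * cmod ((z / (1 + z)) powr (complex_of_real (\<alpha> - 1)) * exp (- (complex_of_real \<beta>) * z))"
  shows "(\<lambda>\<zeta>. f (psi \<zeta>) * psi' \<zeta>) \<in>
           LSE (2 powr (\<beta>/2) * c_const \<alpha> d * K)
               (2 powr ((1 - \<alpha> + \<bar>1 - \<alpha>\<bar>)/2) * K) \<alpha> \<beta> d"
proof -
  have "(\<lambda>\<zeta>. f (psi \<zeta>) * psi' \<zeta>) analytic_on strip d"
    using analytic_on_compose_gen[OF psi_analytic_on assms(3)] psi'_analytic_on assms(2)
    by (auto simp: o_def intro!: analytic_on_mult)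
  then show ?thesis
    unfolding LSE_def
    using norm_f_psi_mult_psi'_le_on_strip[OF assms(2,4,6) _ assms(7)]
      norm_f_psi_mult_psi'_le_on_reals[OF assms(1,2,4,6,7)]
    by blast
qed

end
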